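(* Let $(\mathcal S,\mathcal A,P,R,d_0)$ be a finite episodic MDP with horizon $T$ and $\pi_\theta$ a parameterized policy satisfying the score bound described in the context. Then there exists a finite constant $L_e$ such that for all $\gamma\in[0,1]$ (and all $\theta$), $$\Big\|\sum_{s\in\mathcal S}V^{\pi_\theta}_\gamma(s)\,\frac{\partial}{\partial\theta}d^{\pi_\theta}_\gamma(s)\Big\|\le(1-\gamma)L_e.$$
   Context: Setting: $\mathcal S$ is a finite set of states, $\mathcal A$ a finite set of actions, $P(s'\mid s,a)$ a transition function, $R(\cdot\mid s,a,s')$ a reward distribution supported in $[-R_{\max},R_{\max}]$, and $d_0$ an initial state distribution. There is a terminal absorbing state in which the agent stays and receives reward $0$. An episode: $S_0\sim d_0$; at each time $t$, $A_t\sim\pi_\theta(\cdot\mid S_t)$, $S_{t+1}\sim P(\cdot\mid S_t,A_t)$, $R_t\sim R(\cdot\mid S_t,A_t,S_{t+1})$; the horizon $T$ is fixed and $S_T$ is terminal. The policy $\pi_\theta(a\mid s)$ is positive and differentiable in $\theta\in\mathbb R^n$, and there is a constant $L_\pi$ with $\big\|\frac{\partial}{\partial\theta}\ln\pi_\theta(a\mid s)\big\|\le L_\pi$ for all $\theta,s,a$. Probabilities and expectations are under $\pi=\pi_\theta$. For $\gamma\in[0,1]$ (with $0^0=1$), $V^{\pi_\theta}_\gamma(s)=\mathbb E\big[\sum_{i=t}^{T}\gamma^{i-t}R_i\,\big|\,S_t=s\big]$, treated as a function of $s$ alone (the conditional expectation is assumed not to depend on $t$), and $d^{\pi_\theta}_\gamma(s)=d_0(s)+(1-\gamma)\sum_{t=1}^{T-1}\Pr(S_t=s)$.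 *)

theory Defs
  imports "HOL-Probability.Probability"
begin

definition traj_prob :: "'s pmf \<Rightarrow> ('s \<Rightarrow> 'a \<Rightarrow> 's pmf) \<Rightarrow> ('s \<Rightarrow> 'a pmf)
    \<Rightarrow> 's list \<Rightarrow> 'a list \<Rightarrow> real" where
  "traj_prob d0 P pol ss as =
     pmf d0 (ss ! 0) *
     (\<Prod>j<length as. pmf (pol (ss ! j)) (as ! j) * pmf (P (ss ! j) (as ! j)) (ss ! (j + 1)))"

text \<open>All trajectories of an episode with horizon T: states S_0..S_{T+1},
actions A_0..A_T (rewards R_0..R_T).\<close>
definition trajs :: "nat \<Rightarrow> ('s list \<times> 'a list) set" where
  "trajs T = {(ss, as). length ss = T + 2 \<and> length as = T + 1}"

definition state_prob :: "'s pmf \<Rightarrow> ('s \<Rightarrow> 'a \<Rightarrow> 's pmf) \<Rightarrow> ('s \<Rightarrow> 'a pmf)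
    \<Rightarrow> nat \<Rightarrow> nat \<Rightarrow> 's \<Rightarrow> real" where
  "state_prob d0 P pol T t s =
     (\<Sum>(ss, as) \<in> trajs T. if ss ! t = s then traj_prob d0 P pol ss as else 0)"

definition mean_reward :: "('s \<Rightarrow> 'a \<Rightarrow> 's \<Rightarrow> real measure) \<Rightarrow> 's \<Rightarrow> 'a \<Rightarrow> 's \<Rightarrow> real" where
  "mean_reward R s a s' = integral\<^sup>L (R s a s') (\<lambda>x. x)"

definition cond_return :: "'s pmf \<Rightarrow> ('s \<Rightarrow> 'a \<Rightarrow> 's pmf) \<Rightarrow> ('s \<Rightarrow> 'a pmf)
    \<Rightarrow> ('s \<Rightarrow> 'a \<Rightarrow> 's \<Rightarrow> real measure) \<Rightarrow> nat \<Rightarrow> real \<Rightarrow> nat \<Rightarrow> 's \<Rightarrow> real" where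
  "cond_return d0 P pol R T \<gamma> t s =
     (\<Sum>(ss, as) \<in> trajs T. if ss ! t = s then traj_prob d0 P pol ss as *
        (\<Sum>i = t..T. \<gamma> ^ (i - t) * mean_reward R (ss ! i) (as ! i) (ss ! (i + 1))) else 0)
     / state_prob d0 P pol T t s"

definition disc_visit :: "'s pmf \<Rightarrow> ('s \<Rightarrow> 'a \<Rightarrow> 's pmf) \<Rightarrow> ('s \<Rightarrow> 'a pmf)
    \<Rightarrow> nat \<Rightarrow> real \<Rightarrow> 's \<Rightarrow> real" where
  "disc_visit d0 P pol T \<gamma> s =
     pmf d0 s + (1 - \<gamma>) * (\<Sum>t = 1..T - 1. state_prob d0 P pol T t s)"

end

theory Submission
  imports Defs
begin

(* The parameter enters d_gamma(s) only through the visitation probabilities Pr(S_t = s), t >= 1,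
   which carry the factor 1 - gamma; so it suffices to bound |V_gamma(s)| * |grad Pr(S_t = s)|
   uniformly. A trajectory probability is a product of factors in [0,1] whose policy factors have
   gradient pi * grad ln pi of norm at most L_pi, so by the product rule its gradient has norm at
   most (T + 1) L_pi. Where Pr(S_t = s) = 0 it is at its minimum and its gradient vanishes;
   elsewhere V_gamma(s) is a conditional expected return, bounded by (T + 1) R_max. *)

definition bounded_gradient :: "('v::real_inner \<Rightarrow> real) \<Rightarrow> 'v \<Rightarrow> real \<Rightarrow> bool" where
  "bounded_gradient f x L \<longleftrightarrow> (\<exists>g. GDERIV f x :> g \<and> norm g \<le> L)"

lemma bounded_gradient_nonneg: "bounded_gradient f x L \<Longrightarrow> 0 \<le> L"
  unfolding bounded_gradient_def using norm_ge_zero order_trans by blast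

lemma bounded_gradient_mono: "bounded_gradient f x L \<Longrightarrow> L \<le> L' \<Longrightarrow> bounded_gradient f x L'"
  unfolding bounded_gradient_def by force

lemma bounded_gradient_const: "bounded_gradient (\<lambda>y. c) x 0"
  unfolding bounded_gradient_def using GDERIV_const by force

lemma bounded_gradient_mult:
  assumes "bounded_gradient f x Lf" "bounded_gradient g x Lg" "\<bar>f x\<bar> \<le> 1" "\<bar>g x\<bar> \<le> 1"
  shows "bounded_gradient (\<lambda>y. f y * g y) x (Lf + Lg)"
proof -
  obtain df dg where df: "GDERIV f x :> df" "norm df \<le> Lf" and dg: "GDERIV g x :> dg" "norm dg \<le> Lg"
    using assms(1,2) unfolding bounded_gradient_def by blast
  have "norm (f x *\<^sub>R dg + g x *\<^sub>R df) \<le> \<bar>f x\<bar> * norm dg + \<bar>g x\<bar> * norm df"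
    by (metis norm_scaleR norm_triangle_ineq)
  also have "\<dots> \<le> norm dg + norm df"
    using assms(3,4) by (intro add_mono mult_left_le_one_le) auto
  finally show ?thesis
    using GDERIV_mult[OF df(1) dg(1)] df(2) dg(2) unfolding bounded_gradient_def by force
qed

lemma bounded_gradient_prod:
  assumes "\<And>j. j < n \<Longrightarrow> bounded_gradient (f j) x L" "\<And>j. j < n \<Longrightarrow> \<bar>f j x\<bar> \<le> 1"
  shows "bounded_gradient (\<lambda>y. \<Prod>j<n. f j y) x (real n * L)"
  using assms
proof (induction n)
  case 0
  show ?case using bounded_gradient_const by simp
next
  case (Suc n)
  have "\<bar>\<Prod>j<n. f j x\<bar> \<le> 1"
    using Suc.prems(2) by (auto simp: abs_prod intro: prod_le_1)
  then have "bounded_gradient (\<lambda>y. (\<Prod>j<n. f j y) * f n y) x (real n * L + L)"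
    using Suc by (intro bounded_gradient_mult) auto
  then show ?case by (simp add: algebra_simps)
qed

lemma GDERIV_sum:
  assumes "\<And>a. a \<in> A \<Longrightarrow> GDERIV (f a) x :> g a"
  shows "GDERIV (\<lambda>y. \<Sum>a\<in>A. f a y) x :> (\<Sum>a\<in>A. g a)"
  using assms unfolding gderiv_def inner_sum_right by (rule has_derivative_sum)

lemma bounded_gradient_sum:
  assumes "\<And>a. a \<in> A \<Longrightarrow> bounded_gradient (f a) x L"
  shows "bounded_gradient (\<lambda>y. \<Sum>a\<in>A. f a y) x (real (card A) * L)"
proof -
  obtain g where g: "\<And>a. a \<in> A \<Longrightarrow> GDERIV (f a) x :> g a \<and> norm (g a) \<le> L"
    using assms unfolding bounded_gradient_def by (metis bchoice)
  have "norm (\<Sum>a\<in>A. g a) \<le> real (card A) * L"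
    using g by (intro order_trans[OF norm_sum sum_bounded_above]) auto
  then show ?thesis
    using GDERIV_sum[of A f x g] g unfolding bounded_gradient_def by blast
qed

lemma bounded_gradient_of_ln:
  assumes "\<And>y. 0 < f y" "f x \<le> 1" "bounded_gradient (\<lambda>y. ln (f y)) x L"
  shows "bounded_gradient f x L"
proof -
  obtain g where g: "GDERIV (\<lambda>y. ln (f y)) x :> g" "norm g \<le> L"
    using assms(3) unfolding bounded_gradient_def by blast
  have "GDERIV (\<lambda>y. exp (ln (f y))) x :> exp (ln (f x)) *\<^sub>R g"
    using GDERIV_DERIV_compose[OF g(1) DERIV_exp] .
  then have "GDERIV f x :> f x *\<^sub>R g"
    using assms(1) by simp
  moreover have "f x * norm g \<le> norm g"
    using assms(1,2) by (simp add: less_imp_le mult_left_le_one_le)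
  ultimately show ?thesis
    using assms(1) g(2) unfolding bounded_gradient_def by (force simp: abs_of_pos)
qed

lemma GDERIV_zero_at_minimum:
  assumes "GDERIV f x :> g" "\<And>y. f x \<le> f y"
  shows "g = 0"
proof -
  have "(\<lambda>h. h \<bullet> g) = (\<lambda>h. 0)"
    using assms by (intro differential_zero_maxmin[of x UNIV f]) (auto simp: gderiv_def)
  then have "g \<bullet> g = 0" by metis
  then show ?thesis by simp
qed

lemma norm_scaleR_gradient_le:
  assumes "GDERIV f x :> g" "\<And>y. 0 \<le> f y" "0 < f x \<Longrightarrow> \<bar>c\<bar> \<le> B" "norm g \<le> K" "0 \<le> B"
  shows "norm (c *\<^sub>R g) \<le> B * K"
proof (cases "0 < f x")
  case True
  then show ?thesis
    using assms by (simp add: mult_mono)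
next
  case False
  then have "g = 0"
    using assms(1,2) by (intro GDERIV_zero_at_minimum) (auto intro: order_trans[of _ 0] simp: not_less)
  then show ?thesis
    using assms(4,5) by simp
qed

lemma abs_weighted_sum_le:
  fixes w X :: "'b \<Rightarrow> real"
  assumes "\<And>x. x \<in> A \<Longrightarrow> 0 \<le> w x" "\<And>x. x \<in> A \<Longrightarrow> \<bar>X x\<bar> \<le> B"
  shows "\<bar>\<Sum>x\<in>A. w x * X x\<bar> \<le> B * (\<Sum>x\<in>A. w x)"
proof -
  have "\<bar>\<Sum>x\<in>A. w x * X x\<bar> \<le> (\<Sum>x\<in>A. \<bar>w x * X x\<bar>)"
    by (rule sum_abs)
  also have "\<dots> = (\<Sum>x\<in>A. w x * \<bar>X x\<bar>)"
    using assms(1) by (intro sum.cong) (auto simp: abs_mult)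
  also have "\<dots> \<le> (\<Sum>x\<in>A. B * w x)"
    using assms by (intro sum_mono) (metis mult.commute mult_left_mono)
  finally show ?thesis
    by (simp add: sum_distrib_left)
qed

lemma abs_discounted_return_le:
  fixes \<gamma> :: real
  assumes "\<And>i. \<bar>r i\<bar> \<le> M" "0 \<le> \<gamma>" "\<gamma> \<le> 1"
  shows "\<bar>\<Sum>i = t..T. \<gamma> ^ (i - t) * r i\<bar> \<le> real (T + 1) * M"
proof -
  have "\<bar>\<Sum>i = t..T. \<gamma> ^ (i - t) * r i\<bar> \<le> real (card {t..T}) * M"
  proof (rule order_trans[OF sum_abs sum_bounded_above])
    fix i
    have "\<bar>\<gamma> ^ (i - t)\<bar> * \<bar>r i\<bar> \<le> \<bar>r i\<bar>"
      using assms(2,3) by (simp add: mult_left_le_one_le power_le_one)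
    then show "\<bar>\<gamma> ^ (i - t) * r i\<bar> \<le> M"
      using assms(1)[of i] by (simp add: abs_mult)
  qed
  also have "\<dots> \<le> real (T + 1) * M"
    using assms(1)[of 0] by (intro mult_right_mono) auto
  finally show ?thesis .
qed

lemma mean_reward_bound:
  assumes "prob_space (R s a s')" "sets (R s a s') = sets borel" "AE x in R s a s'. \<bar>x\<bar> \<le> Rmax"
  shows "\<bar>mean_reward R s a s'\<bar> \<le> Rmax"
proof -
  interpret prob_space "R s a s'" by fact
  have "(\<lambda>x. x) \<in> borel_measurable (R s a s')"
    unfolding measurable_cong_sets[OF assms(2) refl] by simp
  then have "integrable (R s a s') (\<lambda>x. x)"
    using assms(3) by (intro integrable_const_bound[where B = Rmax]) simp_all
  then have "(\<integral>x. \<bar>x\<bar> \<partial>R s a s') \<le> Rmax"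
    using assms(3) by (intro integral_le_const) simp_all
  then show ?thesis
    unfolding mean_reward_def using integral_abs_bound[of "R s a s'" "\<lambda>x. x"] by linarith
qed

lemma traj_prob_nonneg: "0 \<le> traj_prob d0 P pol ss as"
  unfolding traj_prob_def by (auto intro!: prod_nonneg mult_nonneg_nonneg)

lemma state_prob_nonneg: "0 \<le> state_prob d0 P pol T t s"
  unfolding state_prob_def by (auto intro!: sum_nonneg traj_prob_nonneg)

lemma cond_return_bound:
  assumes "\<And>s a s'. \<bar>mean_reward R s a s'\<bar> \<le> Rmax" "0 \<le> \<gamma>" "\<gamma> \<le> 1"
    and "0 < state_prob d0 P pol T t s"
  shows "\<bar>cond_return d0 P pol R T \<gamma> t s\<bar> \<le> real (T + 1) * Rmax"
proof -
  define w where "w x = (if fst x ! t = s then traj_prob d0 P pol (fst x) (snd x) else 0)" for x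
  define ret where
    "ret x = (\<Sum>i = t..T. \<gamma> ^ (i - t) * mean_reward R (fst x ! i) (snd x ! i) (fst x ! (i + 1)))" for x
  have "cond_return d0 P pol R T \<gamma> t s = (\<Sum>x\<in>trajs T. w x * ret x) / state_prob d0 P pol T t s"
    unfolding cond_return_def case_prod_unfold w_def ret_def
    by (intro arg_cong2[where f = "(/)"] sum.cong) auto
  moreover have "\<bar>\<Sum>x\<in>trajs T. w x * ret x\<bar> \<le> real (T + 1) * Rmax * (\<Sum>x\<in>trajs T. w x)"
    unfolding ret_def using assms(1-3)
    by (intro abs_weighted_sum_le abs_discounted_return_le) (auto simp: w_def traj_prob_nonneg)
  moreover have "(\<Sum>x\<in>trajs T. w x) = state_prob d0 P pol T t s"
    unfolding state_prob_def w_def case_prod_unfold ..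
  ultimately show ?thesis
    using assms(4) by (metis abs_div_pos pos_divide_le_eq)
qed

lemma traj_prob_bounded_gradient:
  assumes "\<And>s a. bounded_gradient (\<lambda>\<theta>. pmf (pol \<theta> s) a) \<theta> L"
  shows "bounded_gradient (\<lambda>\<theta>. traj_prob d0 P (pol \<theta>) ss as) \<theta> (real (length as) * L)"
proof -
  have step: "bounded_gradient
      (\<lambda>\<theta>. pmf (pol \<theta> (ss ! j)) (as ! j) * pmf (P (ss ! j) (as ! j)) (ss ! (j + 1))) \<theta> L" for j
    using bounded_gradient_mult[OF assms bounded_gradient_const] by (simp add: pmf_le_1)
  have "bounded_gradient (\<lambda>\<theta>. pmf d0 (ss ! 0) *
      (\<Prod>j<length as. pmf (pol \<theta> (ss ! j)) (as ! j) * pmf (P (ss ! j) (as ! j)) (ss ! (j + 1))))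
      \<theta> (0 + real (length as) * L)"
    by (intro bounded_gradient_mult bounded_gradient_const bounded_gradient_prod step)
      (auto simp: pmf_le_1 abs_prod intro!: prod_le_1 mult_le_one)
  then show ?thesis
    unfolding traj_prob_def by simp
qed

lemma state_prob_bounded_gradient:
  fixes d0 :: "'s pmf" and P :: "'s \<Rightarrow> 'a \<Rightarrow> 's pmf"
  assumes "\<And>s a. bounded_gradient (\<lambda>\<theta>. pmf (pol \<theta> s) a) \<theta> L"
  shows "bounded_gradient (\<lambda>\<theta>. state_prob d0 P (pol \<theta>) T t s) \<theta>
           (real (card (trajs T :: ('s list \<times> 'a list) set)) * (real (T + 1) * L))"
proof -
  have "0 \<le> L"
    using assms bounded_gradient_nonneg by blast
  have "bounded_gradient (\<lambda>\<theta>. if fst x ! t = s then traj_prob d0 P (pol \<theta>) (fst x) (snd x) else 0) \<theta>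
          (real (T + 1) * L)" if x: "x \<in> trajs T" for x
  proof (cases "fst x ! t = s")
    case True
    obtain ss as where "x = (ss, as)" "length as = T + 1"
      using x by (cases x) (auto simp: trajs_def)
    with True show ?thesis
      using traj_prob_bounded_gradient[where pol = pol, OF assms, of d0 P ss as] by simp
  next
    case False
    then show ?thesis
      using \<open>0 \<le> L\<close> by (simp add: bounded_gradient_mono[OF bounded_gradient_const])
  qed
  then show ?thesis
    unfolding state_prob_def case_prod_unfold by (rule bounded_gradient_sum)
qed

lemma disc_visit_GDERIV:
  assumes "\<And>t. GDERIV (\<lambda>\<theta>. state_prob d0 P (pol \<theta>) T t s) \<theta> :> G t"
  shows "GDERIV (\<lambda>\<theta>. disc_visit d0 P (pol \<theta>) T \<gamma> s) \<theta> :> (1 - \<gamma>) *\<^sub>R (\<Sum>t = 1..T - 1. G t)"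
  using GDERIV_add[OF GDERIV_const GDERIV_mult[OF GDERIV_const GDERIV_sum[OF assms]]]
  unfolding disc_visit_def by (rule GDERIV_subst) simp

lemma norm_sum_scaleR_sum_le:
  fixes g :: "'c \<Rightarrow> 'b \<Rightarrow> 'v::real_normed_vector"
  assumes "0 \<le> c" "\<And>s t. s \<in> A \<Longrightarrow> t \<in> B \<Longrightarrow> norm (v s *\<^sub>R g t s) \<le> K"
  shows "norm (\<Sum>s\<in>A. v s *\<^sub>R (c *\<^sub>R (\<Sum>t\<in>B. g t s))) \<le> c * (real (card A) * (real (card B) * K))"
proof -
  have "norm (\<Sum>t\<in>B. v s *\<^sub>R g t s) \<le> real (card B) * K" if "s \<in> A" for s
    using assms(2) that by (intro order_trans[OF norm_sum sum_bounded_above])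
  then have "norm (\<Sum>s\<in>A. \<Sum>t\<in>B. v s *\<^sub>R g t s) \<le> real (card A) * (real (card B) * K)"
    by (rule order_trans[OF norm_sum sum_bounded_above])
  moreover have "(\<Sum>s\<in>A. v s *\<^sub>R (c *\<^sub>R (\<Sum>t\<in>B. g t s))) = c *\<^sub>R (\<Sum>s\<in>A. \<Sum>t\<in>B. v s *\<^sub>R g t s)"
    by (simp add: scaleR_sum_right mult.commute)
  ultimately show ?thesis
    using assms(1) by (simp add: mult_left_mono)
qed

lemma disc_visit_gradient_bound:
  fixes d0 :: "'s pmf"
  assumes G: "\<And>t s. GDERIV (\<lambda>\<theta>. state_prob d0 P (pol \<theta>) T t s) \<theta> :> G t s" "\<And>t s. norm (G t s) \<le> K"
    and v: "\<And>t s. t \<le> T \<Longrightarrow> 0 < state_prob d0 P (pol \<theta>) T t s \<Longrightarrow> \<bar>v s\<bar> \<le> B"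
    and "0 \<le> B" "\<gamma> \<le> 1"
  shows "\<exists>D. (\<forall>s. GDERIV (\<lambda>\<theta>. disc_visit d0 P (pol \<theta>) T \<gamma> s) \<theta> :> D s) \<and>
           norm (\<Sum>s\<in>UNIV. v s *\<^sub>R D s) \<le> (1 - \<gamma>) * (real (card (UNIV :: 's set)) * (real (T - 1) * (B * K)))"
proof -
  have "norm (v s *\<^sub>R G t s) \<le> B * K" if "t \<in> {1..T - 1}" for t s
    using that by (intro norm_scaleR_gradient_le[OF G(1) state_prob_nonneg _ G(2) \<open>0 \<le> B\<close>] v) auto
  then have "norm (\<Sum>s\<in>UNIV. v s *\<^sub>R ((1 - \<gamma>) *\<^sub>R (\<Sum>t = 1..T - 1. G t s)))
      \<le> (1 - \<gamma>) * (real (card (UNIV :: 's set)) * (real (card {1..T - 1}) * (B * K)))"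
    using \<open>\<gamma> \<le> 1\<close> by (intro norm_sum_scaleR_sum_le) auto
  then show ?thesis
    using disc_visit_GDERIV[OF G(1)]
    by (intro exI[of _ "\<lambda>s. (1 - \<gamma>) *\<^sub>R (\<Sum>t = 1..T - 1. G t s)"]) auto
qed

theorem lemma3:
  fixes d0 :: "'s::finite pmf"
    and P :: "'s \<Rightarrow> 'a::finite \<Rightarrow> 's pmf"
    and R :: "'s \<Rightarrow> 'a \<Rightarrow> 's \<Rightarrow> real measure"
    and Rmax :: real
    and sterm :: 's
    and T :: nat
    and pol :: "'v::euclidean_space \<Rightarrow> 's \<Rightarrow> 'a pmf"
    and Lpi :: real
    and V :: "real \<Rightarrow> 'v \<Rightarrow> 's \<Rightarrow> real"
  assumes reward_dist: "\<forall>s a s'. prob_space (R s a s') \<and> sets (R s a s') = sets borel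
                          \<and> (AE x in R s a s'. \<bar>x\<bar> \<le> Rmax)"
    and term_absorbing: "\<forall>a. pmf (P sterm a) sterm = 1"
    and term_reward: "\<forall>a s'. AE x in R sterm a s'. x = 0"
    and terminal_at_T: "\<forall>\<theta>. state_prob d0 P (pol \<theta>) T T sterm = 1"
    and pol_pos: "\<forall>\<theta> s a. pmf (pol \<theta> s) a > 0"
    and pol_diff: "\<forall>\<theta> s a. (\<lambda>\<theta>'. pmf (pol \<theta>' s) a) differentiable (at \<theta>)"
    and score_bound: "\<forall>\<theta> s a. \<exists>g. GDERIV (\<lambda>\<theta>'. ln (pmf (pol \<theta>' s) a)) \<theta> :> g \<and> norm g \<le> Lpi"
    and V_def: "\<forall>\<gamma>\<in>{0..1}. \<forall>\<theta> t s. t \<le> T \<longrightarrow> state_prob d0 P (pol \<theta>) T t s > 0 \<longrightarrow>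
                  V \<gamma> \<theta> s = cond_return d0 P (pol \<theta>) R T \<gamma> t s"
  shows "\<exists>Le::real. \<forall>\<gamma>\<in>{0..1}. \<forall>\<theta>. \<exists>D::'s \<Rightarrow> 'v.
           (\<forall>s. GDERIV (\<lambda>\<theta>'. disc_visit d0 P (pol \<theta>') T \<gamma> s) \<theta> :> D s)
           \<and> norm (\<Sum>s\<in>UNIV. V \<gamma> \<theta> s *\<^sub>R D s) \<le> (1 - \<gamma>) * Le"
proof -
  have reward_bound: "\<And>s a s'. \<bar>mean_reward R s a s'\<bar> \<le> Rmax"
    using reward_dist by (intro mean_reward_bound) auto
  then have "0 \<le> Rmax"
    by (meson abs_ge_zero order_trans)
  have pol_gradient: "bounded_gradient (\<lambda>\<theta>'. pmf (pol \<theta>' s) a) \<theta> Lpi" for \<theta> s a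
  proof (rule bounded_gradient_of_ln)
    show "bounded_gradient (\<lambda>\<theta>'. ln (pmf (pol \<theta>' s) a)) \<theta> Lpi"
      using score_bound unfolding bounded_gradient_def by blast
  qed (simp_all add: pol_pos pmf_le_1)
  define K where "K = real (card (trajs T :: ('s list \<times> 'a list) set)) * (real (T + 1) * Lpi)"
  have "\<forall>\<theta> t s. \<exists>g. GDERIV (\<lambda>\<theta>'. state_prob d0 P (pol \<theta>') T t s) \<theta> :> g \<and> norm g \<le> K"
    using state_prob_bounded_gradient[where pol = pol, OF pol_gradient]
    unfolding K_def bounded_gradient_def by blast
  then obtain G where G: "\<And>\<theta> t s. GDERIV (\<lambda>\<theta>'. state_prob d0 P (pol \<theta>') T t s) \<theta> :> G \<theta> t s"
      "\<And>\<theta> t s. norm (G \<theta> t s) \<le> K"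
    by metis
  show ?thesis
    using V_def cond_return_bound[OF reward_bound] \<open>0 \<le> Rmax\<close>
    by (intro exI[of _ "real CARD('s) * (real (T - 1) * (real (T + 1) * Rmax * K))"] ballI allI
        disc_visit_gradient_bound[OF G]) auto
qed

end
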